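(* Let $\mathcal T=\boxtimes ABCD$ be a tetrahedron and $O\in\operatorname{int}\mathcal T$. (1) $(\mathcal T,O)$ has a stable equilibrium on the face $\triangle ABC$ if and only if the dihedral angles between $\triangle ABC$ and each of $\triangle ABO$, $\triangle AOC$, $\triangle OBC$ (i.e. the dihedral angles of the tetrahedron $\boxtimes ABCO$ along the edges $\overline{AB},\overline{AC},\overline{BC}$) are all acute. (2) $(\mathcal T,O')$ has a stable equilibrium on $\triangle ABC$ for every $O'\in\operatorname{int}\mathcal T$ if and only if none of the dihedral angles between $\triangle ABC$ and each of $\triangle ABD$, $\triangle ADC$, $\triangle DBC$ is obtuse. (3) Let $\mathcal S_A$ be a small sphere centred at $A$ and let $P,Q,\Omega$ be the intersections of $\mathcal S_A$ with the segments $\overline{AB},\overline{AC},\overline{AO}$ respectively; define analogously points on a small sphere $\mathcal S_B$ centred at $B$ (intersections with $\overline{BA},\overline{BC},\overline{BO}$). If the dihedral angle between $\triangle ABC$ and $\triangle ABO$ is obtuse, then the spherical angle $\angle QP\Omega$ on $\mathcal S_A$ is obtuse, and so is the corresponding spherical angle on $\mathcal S_B$ (at the point on $\overline{BA}$, between the arcs towards the points on $\overline{BC}$ and $\overline{BO}$).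
   Context: For a convex polyhedron $\mathcal P$ and $O\in\operatorname{int}\mathcal P$, $(\mathcal P,O)$ is in (stable) equilibrium on a face $F$ if there exists $Q$ in the relative interior of $F$ such that the plane perpendicular to $[O,Q]$ at $Q$ supports $\mathcal P$. *)

theory Defs
  imports "HOL-Analysis.Analysis"
begin

type_synonym point = "real ^ 3"

definition vangle :: "point \<Rightarrow> point \<Rightarrow> real" where
  "vangle u v = arccos ((u \<bullet> v) / (norm u * norm v))"

definition orth_part :: "point \<Rightarrow> point \<Rightarrow> point" where
  "orth_part d w = w - ((w \<bullet> d) / (d \<bullet> d)) *\<^sub>R d"

text \<open>Dihedral angle along the edge (E1,E2) between the half-planes (triangles)
  E1 E2 X and E1 E2 Y: the angle between the components of X - E1 and Y - E1
  orthogonal to the edge direction E2 - E1.\<close>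
definition dihedral_angle :: "point \<Rightarrow> point \<Rightarrow> point \<Rightarrow> point \<Rightarrow> real" where
  "dihedral_angle E1 E2 X Y =
     vangle (orth_part (E2 - E1) (X - E1)) (orth_part (E2 - E1) (Y - E1))"

text \<open>Spherical angle at the point X of a sphere centred at Ctr, between the
  great-circle arcs from X towards Y and towards Z: the angle between the tangent
  vectors of these arcs at X.\<close>
definition spherical_angle :: "point \<Rightarrow> point \<Rightarrow> point \<Rightarrow> point \<Rightarrow> real" where
  "spherical_angle Ctr X Y Z =
     vangle (orth_part (X - Ctr) (Y - Ctr)) (orth_part (X - Ctr) (Z - Ctr))"

definition supports :: "point set \<Rightarrow> point set \<Rightarrow> bool" where
  "supports H P \<longleftrightarrow>
     (\<exists>a b. a \<noteq> 0 \<and> H = {x. a \<bullet> x = b} \<and> (\<forall>x\<in>P. a \<bullet> x \<le> b)) \<and> H \<inter> P \<noteq> {}"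

definition perp_plane :: "point \<Rightarrow> point \<Rightarrow> point set" where
  "perp_plane Z Q = {x. (x - Q) \<bullet> (Q - Z) = 0}"

definition equilibrium_on :: "point set \<Rightarrow> point \<Rightarrow> point set \<Rightarrow> bool" where
  "equilibrium_on P Z F \<longleftrightarrow>
     (\<exists>Q \<in> rel_interior F. supports (perp_plane Z Q) P)"

end

theory Submission
  imports Defs
begin

(* Let H be the orthogonal projection of O (called Z below) onto the plane ABC, with barycentric
   coordinates (a, b, c). For the edge AB let p be the component of C - A orthogonal to AB. The
   dihedral angle along AB between ABC and ABO is acute iff p . (O - A) > 0, and p . (O - A) is
   c |p|^2. So the three dihedral angles are acute iff H lies in the open triangle ABC, which is the
   equilibrium condition: a supporting plane touching the face ABC at a relative interior point Q
   cuts out a face of the tetrahedron containing all of ABC, so Q = H; conversely, the plane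
   through H perpendicular to OH supports the tetrahedron, as O lies strictly on one side of it.
   For (2), V |-> p . (V - A) is affine, equal to c |p|^2 + d p . (D - A) at the point with
   barycentric coordinates (a, b, c, d); hence it is positive on the open tetrahedron iff
   p . (D - A) >= 0 (one direction by continuity, as D is a limit of interior points).
   For (3), the tangent vectors defining the spherical angle at P are positive multiples of the
   components of C - A and O - A orthogonal to AB, so the spherical angle equals the dihedral
   angle. *)

lemma abs_vangle_cos_le_1: "\<bar>(u \<bullet> v) / (norm u * norm v)\<bar> \<le> 1"
  using Cauchy_Schwarz_ineq2[of u v]
  by (cases "u = 0 \<or> v = 0") (auto simp: abs_divide divide_le_eq_1 zero_less_mult_iff)

lemma vangle_less_pi_half_iff: "vangle u v < pi / 2 \<longleftrightarrow> 0 < u \<bullet> v"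
proof -
  have "vangle u v < pi / 2 \<longleftrightarrow> 0 < (u \<bullet> v) / (norm u * norm v)"
    using arccos_less_mono[OF abs_vangle_cos_le_1, of 0] by (simp add: vangle_def)
  also have "\<dots> \<longleftrightarrow> 0 < u \<bullet> v"
    by (cases "u = 0 \<or> v = 0") (auto simp: zero_less_divide_iff mult_less_0_iff)
  finally show ?thesis .
qed

lemma vangle_le_pi_half_iff: "vangle u v \<le> pi / 2 \<longleftrightarrow> 0 \<le> u \<bullet> v"
proof -
  have "vangle u v \<le> pi / 2 \<longleftrightarrow> 0 \<le> (u \<bullet> v) / (norm u * norm v)"
    using arccos_le_mono[OF abs_vangle_cos_le_1, of 0] by (simp add: vangle_def)
  also have "\<dots> \<longleftrightarrow> 0 \<le> u \<bullet> v"
    by (cases "u = 0 \<or> v = 0") (auto simp: zero_le_divide_iff mult_le_0_iff)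
  finally show ?thesis .
qed

lemma vangle_scaleR: "0 < s \<Longrightarrow> 0 < t \<Longrightarrow> vangle (s *\<^sub>R u) (t *\<^sub>R v) = vangle u v"
  by (simp add: vangle_def)

lemma inner_orth_part_dir: "orth_part d x \<bullet> d = 0"
  by (cases "d = 0") (auto simp: orth_part_def inner_diff_left)

lemma inner_orth_part_orth_part: "orth_part d x \<bullet> orth_part d y = orth_part d x \<bullet> y"
  by (simp add: orth_part_def [of d y] inner_diff_right inner_orth_part_dir)

lemma orth_part_scaleR: "orth_part d (c *\<^sub>R x) = c *\<^sub>R orth_part d x"
  by (simp add: orth_part_def algebra_simps)

lemma orth_part_scaleR_dir: "c \<noteq> 0 \<Longrightarrow> orth_part (c *\<^sub>R d) x = orth_part d x"
  by (simp add: orth_part_def)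

lemma orth_part_uminus_dir_diff: "orth_part (- d) (x - d) = orth_part d x"
  by (cases "d = 0") (simp_all add: orth_part_def inner_diff_left diff_divide_distrib scaleR_diff_left)

definition inward_normal :: "point \<Rightarrow> point \<Rightarrow> point \<Rightarrow> point" where
  "inward_normal E1 E2 X = orth_part (E2 - E1) (X - E1)"

lemma dihedral_angle_less_pi_half_iff:
  "dihedral_angle E1 E2 X Y < pi / 2 \<longleftrightarrow> 0 < inward_normal E1 E2 X \<bullet> (Y - E1)"
  unfolding dihedral_angle_def inward_normal_def vangle_less_pi_half_iff inner_orth_part_orth_part ..

lemma dihedral_angle_le_pi_half_iff:
  "dihedral_angle E1 E2 X Y \<le> pi / 2 \<longleftrightarrow> 0 \<le> inward_normal E1 E2 X \<bullet> (Y - E1)"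
  unfolding dihedral_angle_def inward_normal_def vangle_le_pi_half_iff inner_orth_part_orth_part ..

lemma dihedral_angle_commute: "dihedral_angle E2 E1 X Y = dihedral_angle E1 E2 X Y"
proof -
  have "orth_part (E1 - E2) (W - E2) = orth_part (E2 - E1) (W - E1)" for W
    using orth_part_uminus_dir_diff[of "E2 - E1" "W - E1"] by simp
  then show ?thesis by (simp add: dihedral_angle_def)
qed

lemma closed_segment_obtain_pos_scaleR:
  assumes "P \<in> closed_segment A B" "P \<noteq> A"
  obtains s where "0 < s" "P - A = s *\<^sub>R (B - A)"
proof -
  obtain s where "0 \<le> s" "P = (1 - s) *\<^sub>R A + s *\<^sub>R B"
    using assms(1) by (auto simp: closed_segment_def)
  with assms(2) show ?thesis
    by (intro that[of s]) (auto simp: algebra_simps)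
qed

lemma spherical_angle_eq_dihedral_angle:
  assumes "P \<in> closed_segment A B" "Q \<in> closed_segment A C" "\<Omega> \<in> closed_segment A Z"
    and "P \<noteq> A" "Q \<noteq> A" "\<Omega> \<noteq> A"
  shows "spherical_angle A P Q \<Omega> = dihedral_angle A B C Z"
proof -
  obtain s where s: "0 < s" "P - A = s *\<^sub>R (B - A)"
    using assms(1,4) by (rule closed_segment_obtain_pos_scaleR)
  obtain t where t: "0 < t" "Q - A = t *\<^sub>R (C - A)"
    using assms(2,5) by (rule closed_segment_obtain_pos_scaleR)
  obtain u where u: "0 < u" "\<Omega> - A = u *\<^sub>R (Z - A)"
    using assms(3,6) by (rule closed_segment_obtain_pos_scaleR)
  have "s \<noteq> 0"
    using s(1) by simp
  then have "spherical_angle A P Q \<Omega>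
      = vangle (t *\<^sub>R orth_part (B - A) (C - A)) (u *\<^sub>R orth_part (B - A) (Z - A))"
    unfolding spherical_angle_def s(2) t(2) u(2) by (simp add: orth_part_scaleR_dir orth_part_scaleR)
  also have "\<dots> = dihedral_angle A B C Z"
    unfolding dihedral_angle_def using t(1) u(1) by (rule vangle_scaleR)
  finally show ?thesis .
qed

lemma obtuse_dihedral_angle_imp_obtuse_spherical_angle:
  assumes "dihedral_angle A B C Z > pi / 2"
  shows "\<forall>r P Q \<Omega>. 0 < r \<and> r < dist A B \<and> r < dist A C \<and> r < dist A Z \<and>
    P \<in> closed_segment A B \<and> dist A P = r \<and> Q \<in> closed_segment A C \<and> dist A Q = r \<and>
    \<Omega> \<in> closed_segment A Z \<and> dist A \<Omega> = r \<longrightarrow> spherical_angle A P Q \<Omega> > pi / 2"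
proof (intro allI impI)
  fix r P Q \<Omega>
  assume "0 < r \<and> r < dist A B \<and> r < dist A C \<and> r < dist A Z \<and>
    P \<in> closed_segment A B \<and> dist A P = r \<and> Q \<in> closed_segment A C \<and> dist A Q = r \<and>
    \<Omega> \<in> closed_segment A Z \<and> dist A \<Omega> = r"
  then have "spherical_angle A P Q \<Omega> = dihedral_angle A B C Z"
    by (intro spherical_angle_eq_dihedral_angle) auto
  with assms show "spherical_angle A P Q \<Omega> > pi / 2"
    by simp
qed

lemma inner_inward_normal_combination:
  "inward_normal E1 E2 X \<bullet> (b *\<^sub>R (E2 - E1) + c *\<^sub>R (X - E1) + w)
     = c * (norm (inward_normal E1 E2 X))\<^sup>2 + inward_normal E1 E2 X \<bullet> w"
  using inner_orth_part_orth_part[of "E2 - E1" "X - E1" "X - E1"]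
  by (simp add: inward_normal_def inner_add_right inner_orth_part_dir power2_norm_eq_inner)

lemma inner_inward_normal_orthogonal:
  "(E2 - E1) \<bullet> n = 0 \<Longrightarrow> (X - E1) \<bullet> n = 0 \<Longrightarrow> inward_normal E1 E2 X \<bullet> n = 0"
  by (simp add: inward_normal_def orth_part_def inner_diff_left)

lemma inward_normal_nonzero:
  assumes "\<not> affine_dependent {E1, E2, X}" "X \<noteq> E1" "X \<noteq> E2"
  shows "inward_normal E1 E2 X \<noteq> 0"
proof
  define k where "k = ((X - E1) \<bullet> (E2 - E1)) / ((E2 - E1) \<bullet> (E2 - E1))"
  assume "inward_normal E1 E2 X = 0"
  then have "X - E1 = k *\<^sub>R (E2 - E1)"
    unfolding inward_normal_def orth_part_def k_def by simp
  then have "X = (1 - k) *\<^sub>R E1 + k *\<^sub>R E2"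
    by (simp add: algebra_simps)
  moreover have "(1 - k) + k = 1"
    by simp
  ultimately have "X \<in> affine hull {E1, E2}"
    unfolding affine_hull_2 by blast
  moreover have "{E1, E2, X} - {X} = {E1, E2}"
    using assms(2,3) by auto
  ultimately have "affine_dependent {E1, E2, X}"
    unfolding affine_dependent_def by auto
  with assms(1) show False ..
qed

lemma inner_inward_normal_foot:
  assumes "{E1, E2, X} \<subseteq> perp_plane Z H" "H = a *\<^sub>R E1 + b *\<^sub>R E2 + c *\<^sub>R X" "a + b + c = 1"
  shows "inward_normal E1 E2 X \<bullet> (Z - E1) = c * (norm (inward_normal E1 E2 X))\<^sup>2"
proof -
  have "(V - E1) \<bullet> (Z - H) = 0" if "V \<in> {E1, E2, X}" for V
    using assms(1) that by (auto simp: perp_plane_def inner_diff_left inner_diff_right inner_commute)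
  then have orthogonal: "inward_normal E1 E2 X \<bullet> (Z - H) = 0"
    by (simp add: inner_inward_normal_orthogonal)
  have a: "a = 1 - b - c"
    using assms(3) by simp
  have "Z - E1 = b *\<^sub>R (E2 - E1) + c *\<^sub>R (X - E1) + (Z - H)"
    unfolding assms(2) a by (simp add: algebra_simps)
  then have "inward_normal E1 E2 X \<bullet> (Z - E1)
      = c * (norm (inward_normal E1 E2 X))\<^sup>2 + inward_normal E1 E2 X \<bullet> (Z - H)"
    by (simp only: inner_inward_normal_combination)
  with orthogonal show ?thesis
    by simp
qed

lemma perp_plane_foot_exists:
  fixes A B C Z :: point
  obtains a b c where "a + b + c = 1" "{A, B, C} \<subseteq> perp_plane Z (a *\<^sub>R A + b *\<^sub>R B + c *\<^sub>R C)"
proof -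
  let ?U = "span {B - A, C - A}"
  obtain y n where y: "y \<in> ?U" and n: "\<And>w. w \<in> ?U \<Longrightarrow> orthogonal n w" and Z: "Z - A = y + n"
    using orthogonal_subspace_decomp_exists by blast
  from y obtain b where "y - b *\<^sub>R (B - A) \<in> span {C - A}"
    by (auto simp: span_breakdown_eq)
  then obtain c where "y - b *\<^sub>R (B - A) = c *\<^sub>R (C - A)"
    by (auto simp: span_singleton)
  then have bc: "y = b *\<^sub>R (B - A) + c *\<^sub>R (C - A)"
    by (simp add: diff_eq_eq add.commute)
  define H where "H = (1 - b - c) *\<^sub>R A + b *\<^sub>R B + c *\<^sub>R C"
  have H: "H = A + y"
    unfolding H_def bc by (simp add: algebra_simps)
  have "n = Z - A - y"
    using Z by simp
  then have HZ: "H - Z = - n"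
    unfolding H by (simp add: algebra_simps)
  have "V \<in> perp_plane Z H" if "V \<in> {A, B, C}" for V
  proof -
    have "V - A \<in> ?U"
      using that by (auto intro: span_base span_zero)
    then have "V - A - y \<in> ?U"
      using y by (rule span_diff)
    then have "V - H \<in> ?U"
      unfolding H by (simp add: diff_diff_eq)
    then have "n \<bullet> (V - H) = 0"
      using n orthogonal_def by blast
    then show ?thesis
      unfolding perp_plane_def HZ inner_minus_right using inner_commute[of n "V - H"] by simp
  qed
  then have "{A, B, C} \<subseteq> perp_plane Z H"
    by blast
  then show ?thesis
    unfolding H_def by (rule that[rotated]) simp
qed

lemma equilibrium_on_imp_face_in_perp_plane:
  assumes "convex P" "F \<subseteq> P" "equilibrium_on P Z F"
  obtains Q where "Q \<in> rel_interior F" "F \<subseteq> perp_plane Z Q"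
proof -
  obtain Q where Q: "Q \<in> rel_interior F" and "supports (perp_plane Z Q) P"
    using assms(3) unfolding equilibrium_on_def ..
  then obtain a b where plane: "perp_plane Z Q = {x. a \<bullet> x = b}" and below: "\<forall>x\<in>P. a \<bullet> x \<le> b"
    unfolding supports_def by auto
  have face: "P \<inter> {x. a \<bullet> x = b} face_of P"
    using assms(1) below by (simp add: face_of_Int_supporting_hyperplane_le)
  have "Q \<in> perp_plane Z Q"
    by (simp add: perp_plane_def)
  then have "Q \<in> P \<inter> {x. a \<bullet> x = b}"
    using Q assms(2) rel_interior_subset unfolding plane by auto
  then have "(P \<inter> {x. a \<bullet> x = b}) \<inter> rel_interior F \<noteq> {}"
    using Q by blast
  with face assms(2) have "F \<subseteq> P \<inter> {x. a \<bullet> x = b}"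
    by (rule subset_of_face_of)
  then have "F \<subseteq> perp_plane Z Q"
    unfolding plane by auto
  with Q show ?thesis
    by (rule that)
qed

lemma supports_perp_plane_at_foot:
  assumes "S \<subseteq> perp_plane Z H" "H \<in> convex hull S" "Z \<in> convex hull (insert D S)" "Z \<noteq> H"
  shows "supports (perp_plane Z H) (convex hull (insert D S))"
proof -
  define n where "n = H - Z"
  have plane: "perp_plane Z H = {x. n \<bullet> x = n \<bullet> H}"
    unfolding perp_plane_def n_def by (auto simp: inner_diff_left inner_commute)
  have S: "n \<bullet> x = n \<bullet> H" if "x \<in> S" for x
    using assms(1) that plane by auto
  have "n \<noteq> 0"
    using assms(4) by (simp add: n_def)
  then have "0 < n \<bullet> n"
    by simp
  moreover have "n \<bullet> n = n \<bullet> H - n \<bullet> Z"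
    unfolding n_def by (rule inner_diff_right)
  ultimately have Z: "n \<bullet> Z < n \<bullet> H"
    by linarith
  have "n \<bullet> D \<le> n \<bullet> H"
  proof (rule ccontr)
    assume "\<not> n \<bullet> D \<le> n \<bullet> H"
    then have "insert D S \<subseteq> {x. n \<bullet> H \<le> n \<bullet> x}"
      using S by fastforce
    then have "convex hull (insert D S) \<subseteq> {x. n \<bullet> H \<le> n \<bullet> x}"
      by (rule hull_minimal) (rule convex_halfspace_ge)
    with assms(3) Z show False
      by auto
  qed
  then have "insert D S \<subseteq> {x. n \<bullet> x \<le> n \<bullet> H}"
    using S by fastforce
  then have "convex hull (insert D S) \<subseteq> {x. n \<bullet> x \<le> n \<bullet> H}"
    by (rule hull_minimal) (rule convex_halfspace_le)
  moreover have "H \<in> perp_plane Z H \<inter> convex hull (insert D S)"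
    using assms(2) hull_mono[of S "insert D S"] by (auto simp: perp_plane_def)
  ultimately show ?thesis
    unfolding supports_def using \<open>n \<noteq> 0\<close> plane
    by (intro conjI exI[of _ n] exI[of _ "n \<bullet> H"]) auto
qed

lemma equilibrium_on_face_iff:
  assumes "Z \<in> convex hull (insert D S)" "Z \<notin> convex hull S"
  shows "equilibrium_on (convex hull (insert D S)) Z (convex hull S) \<longleftrightarrow>
    (\<exists>H \<in> rel_interior (convex hull S). S \<subseteq> perp_plane Z H)"
proof
  assume equilibrium: "equilibrium_on (convex hull (insert D S)) Z (convex hull S)"
  have "convex hull S \<subseteq> convex hull (insert D S)"
    by (rule hull_mono) auto
  then obtain Q where "Q \<in> rel_interior (convex hull S)" "convex hull S \<subseteq> perp_plane Z Q"
    by (rule equilibrium_on_imp_face_in_perp_plane[OF convex_convex_hull _ equilibrium])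
  moreover have "S \<subseteq> convex hull S"
    by (rule hull_subset)
  ultimately show "\<exists>H \<in> rel_interior (convex hull S). S \<subseteq> perp_plane Z H"
    by blast
next
  assume "\<exists>H \<in> rel_interior (convex hull S). S \<subseteq> perp_plane Z H"
  then obtain H where H: "H \<in> rel_interior (convex hull S)" "S \<subseteq> perp_plane Z H" ..
  then have "H \<in> convex hull S"
    using rel_interior_subset by blast
  moreover from this have "Z \<noteq> H"
    using assms(2) by blast
  ultimately have "supports (perp_plane Z H) (convex hull (insert D S))"
    using H(2) assms(1) by (intro supports_perp_plane_at_foot)
  with H(1) show "equilibrium_on (convex hull (insert D S)) Z (convex hull S)"
    unfolding equilibrium_on_def ..
qed

lemma rel_interior_triangle_iff:
  fixes A B C :: point
  assumes "\<not> affine_dependent {A, B, C}" "A \<noteq> B" "A \<noteq> C" "B \<noteq> C"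
  shows "H \<in> rel_interior (convex hull {A, B, C}) \<longleftrightarrow>
    (\<exists>a b c. 0 < a \<and> 0 < b \<and> 0 < c \<and> a + b + c = 1 \<and> H = a *\<^sub>R A + b *\<^sub>R B + c *\<^sub>R C)"
  unfolding rel_interior_convex_hull_explicit[OF assms(1)]
proof safe
  fix u :: "point \<Rightarrow> real"
  assume "\<forall>x\<in>{A, B, C}. 0 < u x" "sum u {A, B, C} = 1"
  with assms(2-4) show "\<exists>a b c. 0 < a \<and> 0 < b \<and> 0 < c \<and> a + b + c = 1 \<and>
      (\<Sum>x\<in>{A, B, C}. u x *\<^sub>R x) = a *\<^sub>R A + b *\<^sub>R B + c *\<^sub>R C"
    by (intro exI[of _ "u A"] exI[of _ "u B"] exI[of _ "u C"]) (simp add: algebra_simps)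
next
  fix a b c :: real
  assume "0 < a" "0 < b" "0 < c" "a + b + c = 1"
  with assms(2-4) show "\<exists>u. (\<forall>x\<in>{A, B, C}. 0 < u x) \<and> sum u {A, B, C} = 1 \<and>
      (\<Sum>x\<in>{A, B, C}. u x *\<^sub>R x) = a *\<^sub>R A + b *\<^sub>R B + c *\<^sub>R C"
    by (intro exI[of _ "\<lambda>x. if x = A then a else if x = B then b else c"]) (simp add: algebra_simps)
qed

lemma tetrahedron_interior_coords:
  fixes A B C D :: point
  assumes "\<not> affine_dependent {A, B, C, D}" "card {A, B, C, D} = 4"
    and "V \<in> interior (convex hull {A, B, C, D})"
  obtains a b c d where "0 < a" "0 < b" "0 < c" "0 < d" "a + b + c + d = 1"
    "V = a *\<^sub>R A + b *\<^sub>R B + c *\<^sub>R C + d *\<^sub>R D"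
proof -
  have distinct: "A \<noteq> B" "A \<noteq> C" "A \<noteq> D" "B \<noteq> C" "B \<noteq> D" "C \<noteq> D"
    using assms(2) by (auto simp: card_insert_if split: if_splits)
  obtain u where u: "\<forall>x\<in>{A, B, C, D}. 0 < u x" "sum u {A, B, C, D} = 1"
    "(\<Sum>x\<in>{A, B, C, D}. u x *\<^sub>R x) = V"
    using assms(3) unfolding interior_convex_hull_explicit[OF assms(1)] assms(2) by auto
  have "sum u {A, B, C, D} = u A + u B + u C + u D"
    "(\<Sum>x\<in>{A, B, C, D}. u x *\<^sub>R x) = u A *\<^sub>R A + u B *\<^sub>R B + u C *\<^sub>R C + u D *\<^sub>R D"
    using distinct by (simp_all add: add.assoc)
  with u show ?thesis
    by (intro that[of "u A" "u B" "u C" "u D"]) simp_all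
qed

lemma tetrahedron_face_disjoint_interior:
  fixes A B C D :: point
  assumes "\<not> affine_dependent {A, B, C, D}" "D \<notin> {A, B, C}"
  shows "convex hull {A, B, C} \<inter> interior (convex hull {A, B, C, D}) = {}"
proof (rule face_of_disjoint_interior)
  show "convex hull {A, B, C} face_of convex hull {A, B, C, D}"
    unfolding face_of_convex_hull_affine_independent[OF assms(1)]
    by (intro exI[of _ "{A, B, C}"]) auto
  have "{A, B, C, D} - {D} = {A, B, C}"
    using assms(2) by auto
  then have "D \<notin> affine hull {A, B, C}"
    using assms(1) unfolding affine_dependent_def by auto
  then have "D \<notin> convex hull {A, B, C}"
    using convex_hull_subset_affine_hull by blast
  moreover have "D \<in> convex hull {A, B, C, D}"
    by (simp add: hull_inc)
  ultimately show "convex hull {A, B, C} \<noteq> convex hull {A, B, C, D}"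
    by blast
qed

lemma foot_in_open_triangle_iff:
  assumes "\<not> affine_dependent {A, B, C}" "A \<noteq> B" "A \<noteq> C" "B \<noteq> C"
  shows "(\<exists>H \<in> rel_interior (convex hull {A, B, C}). {A, B, C} \<subseteq> perp_plane Z H) \<longleftrightarrow>
    0 < inward_normal A B C \<bullet> (Z - A) \<and> 0 < inward_normal A C B \<bullet> (Z - A) \<and>
    0 < inward_normal B C A \<bullet> (Z - B)"
proof -
  have norms: "0 < (norm (inward_normal A B C))\<^sup>2" "0 < (norm (inward_normal A C B))\<^sup>2"
    "0 < (norm (inward_normal B C A))\<^sup>2"
    using inward_normal_nonzero[of A B C] inward_normal_nonzero[of A C B]
      inward_normal_nonzero[of B C A] assms
    by (simp_all add: insert_commute)
  have foot: "inward_normal A B C \<bullet> (Z - A) = c * (norm (inward_normal A B C))\<^sup>2 \<and>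
      inward_normal A C B \<bullet> (Z - A) = b * (norm (inward_normal A C B))\<^sup>2 \<and>
      inward_normal B C A \<bullet> (Z - B) = a * (norm (inward_normal B C A))\<^sup>2"
    if "a + b + c = 1" "{A, B, C} \<subseteq> perp_plane Z (a *\<^sub>R A + b *\<^sub>R B + c *\<^sub>R C)" for a b c
    using inner_inward_normal_foot[of A B C Z _ a b c] inner_inward_normal_foot[of A C B Z _ a c b]
      inner_inward_normal_foot[of B C A Z _ b c a] that
    by (simp add: insert_commute add_ac)
  show ?thesis
  proof
    assume "\<exists>H \<in> rel_interior (convex hull {A, B, C}). {A, B, C} \<subseteq> perp_plane Z H"
    then obtain H where H: "H \<in> rel_interior (convex hull {A, B, C})" "{A, B, C} \<subseteq> perp_plane Z H"
      ..
    then obtain a b c where "0 < a" "0 < b" "0 < c" "a + b + c = 1"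
      and "H = a *\<^sub>R A + b *\<^sub>R B + c *\<^sub>R C"
      unfolding rel_interior_triangle_iff[OF assms] by blast
    with H(2) foot norms show "0 < inward_normal A B C \<bullet> (Z - A) \<and> 0 < inward_normal A C B \<bullet> (Z - A) \<and>
        0 < inward_normal B C A \<bullet> (Z - B)"
      by simp
  next
    assume positive: "0 < inward_normal A B C \<bullet> (Z - A) \<and> 0 < inward_normal A C B \<bullet> (Z - A) \<and>
        0 < inward_normal B C A \<bullet> (Z - B)"
    obtain a b c where sum: "a + b + c = 1"
      and perp: "{A, B, C} \<subseteq> perp_plane Z (a *\<^sub>R A + b *\<^sub>R B + c *\<^sub>R C)"
      by (rule perp_plane_foot_exists)
    have "0 < a" "0 < b" "0 < c"
      using foot[OF sum perp] positive norms by (simp_all add: zero_less_mult_iff)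
    with sum have "a *\<^sub>R A + b *\<^sub>R B + c *\<^sub>R C \<in> rel_interior (convex hull {A, B, C})"
      unfolding rel_interior_triangle_iff[OF assms] by blast
    with perp show "\<exists>H \<in> rel_interior (convex hull {A, B, C}). {A, B, C} \<subseteq> perp_plane Z H"
      by blast
  qed
qed

lemma equilibrium_on_tetrahedron_face_iff:
  assumes "\<not> affine_dependent {A, B, C, D}" "card {A, B, C, D} = 4"
    and "Z \<in> interior (convex hull {A, B, C, D})"
  shows "equilibrium_on (convex hull {A, B, C, D}) Z (convex hull {A, B, C}) \<longleftrightarrow>
    0 < inward_normal A B C \<bullet> (Z - A) \<and> 0 < inward_normal A C B \<bullet> (Z - A) \<and>
    0 < inward_normal B C A \<bullet> (Z - B)"
proof -
  have distinct: "A \<noteq> B" "A \<noteq> C" "A \<noteq> D" "B \<noteq> C" "B \<noteq> D" "C \<noteq> D"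
    using assms(2) by (auto simp: card_insert_if split: if_splits)
  have insert_D: "{A, B, C, D} = insert D {A, B, C}"
    by auto
  have "Z \<in> convex hull (insert D {A, B, C})"
    using assms(3) interior_subset unfolding insert_D by blast
  moreover have "Z \<notin> convex hull {A, B, C}"
    using tetrahedron_face_disjoint_interior[OF assms(1)] assms(3) distinct by auto
  ultimately have "equilibrium_on (convex hull {A, B, C, D}) Z (convex hull {A, B, C}) \<longleftrightarrow>
      (\<exists>H \<in> rel_interior (convex hull {A, B, C}). {A, B, C} \<subseteq> perp_plane Z H)"
    unfolding insert_D by (rule equilibrium_on_face_iff)
  also have "\<dots> \<longleftrightarrow> 0 < inward_normal A B C \<bullet> (Z - A) \<and> 0 < inward_normal A C B \<bullet> (Z - A) \<and>
      0 < inward_normal B C A \<bullet> (Z - B)"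
    using affine_independent_subset[OF assms(1)] distinct by (intro foot_in_open_triangle_iff) auto
  finally show ?thesis .
qed

lemma inward_normal_positive_on_interior_iff:
  assumes "\<not> affine_dependent {E1, E2, X, Y}" "card {E1, E2, X, Y} = 4"
  shows "(\<forall>V \<in> interior (convex hull {E1, E2, X, Y}). 0 < inward_normal E1 E2 X \<bullet> (V - E1)) \<longleftrightarrow>
    0 \<le> inward_normal E1 E2 X \<bullet> (Y - E1)"
proof
  let ?T = "convex hull {E1, E2, X, Y}"
  assume positive: "\<forall>V \<in> interior ?T. 0 < inward_normal E1 E2 X \<bullet> (V - E1)"
  have "interior ?T \<noteq> {}"
    using interior_convex_hull_eq_empty[of "{E1, E2, X, Y}"] assms by simp
  then have "closure (interior ?T) = ?T"
    by (simp add: convex_closure_interior finite_imp_compact)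
  then show "0 \<le> inward_normal E1 E2 X \<bullet> (Y - E1)"
  proof (intro continuous_ge_on_closure[where S = "interior ?T" and x = Y
        and f = "\<lambda>V. inward_normal E1 E2 X \<bullet> (V - E1)"])
    show "continuous_on (closure (interior ?T)) (\<lambda>V. inward_normal E1 E2 X \<bullet> (V - E1))"
      by (intro continuous_intros)
  qed (use positive in \<open>auto simp: hull_inc less_imp_le\<close>)
next
  assume nonneg: "0 \<le> inward_normal E1 E2 X \<bullet> (Y - E1)"
  have distinct: "X \<noteq> E1" "X \<noteq> E2"
    using assms(2) by (auto simp: card_insert_if split: if_splits)
  have "\<not> affine_dependent {E1, E2, X}"
    using assms(1) by (rule affine_independent_subset) auto
  then have norm: "0 < (norm (inward_normal E1 E2 X))\<^sup>2"
    using inward_normal_nonzero distinct by simp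
  show "\<forall>V \<in> interior (convex hull {E1, E2, X, Y}). 0 < inward_normal E1 E2 X \<bullet> (V - E1)"
  proof
    fix V
    assume "V \<in> interior (convex hull {E1, E2, X, Y})"
    then obtain a b c d where "0 < a" "0 < b" "0 < c" "0 < d" and sum: "a + b + c + d = 1"
      and V: "V = a *\<^sub>R E1 + b *\<^sub>R E2 + c *\<^sub>R X + d *\<^sub>R Y"
      by (rule tetrahedron_interior_coords[OF assms])
    have a: "a = 1 - b - c - d"
      using sum by simp
    have "V - E1 = b *\<^sub>R (E2 - E1) + c *\<^sub>R (X - E1) + d *\<^sub>R (Y - E1)"
      unfolding V a by (simp add: algebra_simps)
    then have "inward_normal E1 E2 X \<bullet> (V - E1)
        = c * (norm (inward_normal E1 E2 X))\<^sup>2 + d * (inward_normal E1 E2 X \<bullet> (Y - E1))"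
      by (simp add: inner_inward_normal_combination)
    with \<open>0 < c\<close> \<open>0 < d\<close> norm nonneg show "0 < inward_normal E1 E2 X \<bullet> (V - E1)"
      by (simp add: add_pos_nonneg)
  qed
qed

theorem lemma1p5:
  fixes A B C D Z :: point
  assumes tet: "\<not> affine_dependent {A, B, C, D}" "card {A, B, C, D} = 4"
    and Z: "Z \<in> interior (convex hull {A, B, C, D})"
  shows
    "(equilibrium_on (convex hull {A, B, C, D}) Z (convex hull {A, B, C}) \<longleftrightarrow>
        dihedral_angle A B C Z < pi / 2 \<and> dihedral_angle A C B Z < pi / 2 \<and>
        dihedral_angle B C A Z < pi / 2)
   \<and> ((\<forall>Z' \<in> interior (convex hull {A, B, C, D}).
          equilibrium_on (convex hull {A, B, C, D}) Z' (convex hull {A, B, C})) \<longleftrightarrow>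
        dihedral_angle A B C D \<le> pi / 2 \<and> dihedral_angle A C B D \<le> pi / 2 \<and>
        dihedral_angle B C A D \<le> pi / 2)
   \<and> (dihedral_angle A B C Z > pi / 2 \<longrightarrow>
        (\<forall>r P Q \<Omega>. 0 < r \<and> r < dist A B \<and> r < dist A C \<and> r < dist A Z \<and>
            P \<in> closed_segment A B \<and> dist A P = r \<and>
            Q \<in> closed_segment A C \<and> dist A Q = r \<and>
            \<Omega> \<in> closed_segment A Z \<and> dist A \<Omega> = r \<longrightarrow>
            spherical_angle A P Q \<Omega> > pi / 2)
      \<and> (\<forall>r P Q \<Omega>. 0 < r \<and> r < dist B A \<and> r < dist B C \<and> r < dist B Z \<and>
            P \<in> closed_segment B A \<and> dist B P = r \<and>
            Q \<in> closed_segment B C \<and> dist B Q = r \<and>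
            \<Omega> \<in> closed_segment B Z \<and> dist B \<Omega> = r \<longrightarrow>
            spherical_angle B P Q \<Omega> > pi / 2))"
proof -
  note equilibrium_iff = equilibrium_on_tetrahedron_face_iff[OF tet]
  have permuted: "{A, C, B, D} = {A, B, C, D}" "{B, C, A, D} = {A, B, C, D}"
    by auto
  have all_interior: "(\<forall>Z' \<in> interior (convex hull {A, B, C, D}).
        equilibrium_on (convex hull {A, B, C, D}) Z' (convex hull {A, B, C})) \<longleftrightarrow>
      0 \<le> inward_normal A B C \<bullet> (D - A) \<and> 0 \<le> inward_normal A C B \<bullet> (D - A) \<and>
      0 \<le> inward_normal B C A \<bullet> (D - B)"
    using inward_normal_positive_on_interior_iff[of A B C D]
      inward_normal_positive_on_interior_iff[of A C B D]
      inward_normal_positive_on_interior_iff[of B C A D] tet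
    by (simp add: equilibrium_iff permuted ball_conj_distrib)
  show ?thesis
    unfolding equilibrium_iff[OF Z] all_interior dihedral_angle_less_pi_half_iff
      dihedral_angle_le_pi_half_iff
    using obtuse_dihedral_angle_imp_obtuse_spherical_angle[of A B C Z]
      obtuse_dihedral_angle_imp_obtuse_spherical_angle[of B A C Z]
    by (simp add: dihedral_angle_commute)
qed

end
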